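(* Let $n\ge1$, $\rho\in\mathbb{R}$ with $3+n-3n\rho\neq0$, and let $Q_n$ be the quaternion Lie group with Lie algebra basis $e_1,\dots,e_{4n+3}$ as in the context. Let $g_0$ be a left-invariant metric diagonal in this basis with $g_j(0)=g_1(0)$ for $1\le j\le 4n$, $g_{4n+1}(0)=g_{4n+2}(0)=g_{4n+3}(0)$, and $g_1(0)^2=g_{4n+1}(0)$. Let $g(t)$ be the diagonal left-invariant metric with $g_j(t)=g_1(0)(1+ct)^{\frac{3(1-2n\rho)}{6+2n-6n\rho}}$ ($1\le j\le 4n$), $g_{4n+k}(t)=g_{4n+1}(0)(1+ct)^{\frac{-n(1+3\rho)}{3+n-3n\rho}}$ ($1\le k\le3$), $c=\frac{g_{4n+1}(0)}{g_1(0)^2}(6+2n-6n\rho)$, which is the solution of the Ricci–Bourguignon flow $\partial_tg=-2\mathrm{Ric}+2\rho Rg$ starting at $g_0$. Then $(Q_n,g_0)$ is of Heisenberg type, but the Heisenberg type property is not preserved along $g(t)$: for $t\ne0$ (with $1+ct>0$), the metric Lie algebra of $(Q_n,g(t))$ is not of Heisenberg type.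
   Context: $Q_n$ is the simply connected 2-step nilpotent Lie group whose Lie algebra has basis $X_{1l},X_{2l},X_{3l},X_{4l}$ ($1\le l\le n$), $Z_1,Z_2,Z_3$ with nonzero brackets $[X_{1l},X_{2l}]=-Z_1$, $[X_{1l},X_{3l}]=Z_3$, $[X_{1l},X_{4l}]=Z_2$, $[X_{2l},X_{3l}]=Z_2$, $[X_{2l},X_{4l}]=-Z_3$, $[X_{3l},X_{4l}]=-Z_1$; set $e_i=X_{1i}$, $e_{n+i}=X_{2i}$, $e_{2n+i}=X_{3i}$, $e_{3n+i}=X_{4i}$, $e_{4n+r}=Z_r$, and $g_\alpha=g(e_\alpha,e_\alpha)$. For a 2-step nilpotent Lie algebra with inner product, with center $\mathcal{Z}$ and $\mathcal{V}=\mathcal{Z}^\perp$, define $j(Z):\mathcal{V}\to\mathcal{V}$ for $Z\in\mathcal{Z}$ by $\langle j(Z)X,Y\rangle=\langle Z,[X,Y]\rangle$; the metric Lie algebra is of Heisenberg type if $j(Z)^2=-|Z|^2\mathrm{Id}$ for all $Z\in\mathcal{Z}$. Here $\mathcal{Z}=\mathrm{span}\{Z_1,Z_2,Z_3\}$ and $\mathcal{V}=\mathrm{span}\{e_1,\dots,e_{4n}\}$, with $j$ and norms taken with respect to $g(t)$. *)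

theory Defs
  imports Complex_Main
begin

(* Quaternion Lie algebra q_n with basis e_1..e_{4n+3}; vectors are functions nat => real,
   e_i = X_{1i}, e_{n+i} = X_{2i}, e_{2n+i} = X_{3i}, e_{3n+i} = X_{4i}, e_{4n+r} = Z_r. *)

(* coefficient of Z_r in [X_{k1 l}, X_{k2 l}] for k1 < k2 *)
definition qup :: "nat \<Rightarrow> nat \<Rightarrow> nat \<Rightarrow> real" where
  "qup k1 k2 r =
     (if (k1, k2) = (1, 2) then (if r = 1 then -1 else 0)
      else if (k1, k2) = (1, 3) then (if r = 3 then 1 else 0)
      else if (k1, k2) = (1, 4) then (if r = 2 then 1 else 0)
      else if (k1, k2) = (2, 3) then (if r = 2 then 1 else 0)
      else if (k1, k2) = (2, 4) then (if r = 3 then -1 else 0)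
      else if (k1, k2) = (3, 4) then (if r = 1 then -1 else 0)
      else 0)"

definition qconst :: "nat \<Rightarrow> nat \<Rightarrow> nat \<Rightarrow> real" where
  "qconst k1 k2 r = (if k1 < k2 then qup k1 k2 r else if k2 < k1 then - qup k2 k1 r else 0)"

definition qkind :: "nat \<Rightarrow> nat \<Rightarrow> nat" where "qkind n a = (a - 1) div n + 1"
definition qblock :: "nat \<Rightarrow> nat \<Rightarrow> nat" where "qblock n a = (a - 1) mod n"

definition qsc :: "nat \<Rightarrow> nat \<Rightarrow> nat \<Rightarrow> nat \<Rightarrow> real" where
  "qsc n a b r = (if a \<in> {1..4*n} \<and> b \<in> {1..4*n} \<and> qblock n a = qblock n b
                  then qconst (qkind n a) (qkind n b) r else 0)"

definition qbr :: "nat \<Rightarrow> (nat \<Rightarrow> real) \<Rightarrow> (nat \<Rightarrow> real) \<Rightarrow> (nat \<Rightarrow> real)" where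
  "qbr n x y = (\<lambda>i. if 4*n+1 \<le> i \<and> i \<le> 4*n+3 then
       (\<Sum>a\<in>{1..4*n}. \<Sum>b\<in>{1..4*n}. x a * y b * qsc n a b (i - 4*n)) else 0)"

definition qalg :: "nat \<Rightarrow> (nat \<Rightarrow> real) set" where
  "qalg n = {x. \<forall>i. x i \<noteq> 0 \<longrightarrow> 1 \<le> i \<and> i \<le> 4*n+3}"
definition qV :: "nat \<Rightarrow> (nat \<Rightarrow> real) set" where
  "qV n = {x. \<forall>i. x i \<noteq> 0 \<longrightarrow> 1 \<le> i \<and> i \<le> 4*n}"
definition qZ :: "nat \<Rightarrow> (nat \<Rightarrow> real) set" where
  "qZ n = {x. \<forall>i. x i \<noteq> 0 \<longrightarrow> 4*n+1 \<le> i \<and> i \<le> 4*n+3}"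

definition qip :: "nat \<Rightarrow> (nat \<Rightarrow> real) \<Rightarrow> (nat \<Rightarrow> real) \<Rightarrow> (nat \<Rightarrow> real) \<Rightarrow> real" where
  "qip n g x y = (\<Sum>\<alpha>\<in>{1..4*n+3}. g \<alpha> * x \<alpha> * y \<alpha>)"

definition qj :: "nat \<Rightarrow> (nat \<Rightarrow> real) \<Rightarrow> (nat \<Rightarrow> real) \<Rightarrow> (nat \<Rightarrow> real) \<Rightarrow> (nat \<Rightarrow> real)" where
  "qj n g Z X = (THE W. W \<in> qV n \<and> (\<forall>Y\<in>qV n. qip n g W Y = qip n g Z (qbr n X Y)))"

definition heisenberg_type :: "nat \<Rightarrow> (nat \<Rightarrow> real) \<Rightarrow> bool" where
  "heisenberg_type n g \<longleftrightarrow>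
     (\<forall>Z\<in>qZ n. \<forall>X\<in>qV n. qj n g Z (qj n g Z X) = (\<lambda>i. - qip n g Z Z * X i))"

end

theory Submission imports Defs begin

(* For a metric equal to a on V and to b on the centre, j(Z) = (b/a) J(Z), where J(Z) is the
   matrix of Z against the bracket; on each block X_{1l},...,X_{4l} the matrices of Z_1, Z_2, Z_3
   are anticommuting complex structures (the quaternion relations), so J(Z)^2 = -|z|^2 Id with
   the Euclidean norm of the coefficient vector z. As |Z|^2 = b |z|^2, the metric is of
   Heisenberg type iff (b/a)^2 = b, i.e. b = a^2. Along the Ricci-Bourguignon flow the exponents
   p, q of the two scalings satisfy 2p = q + 1, so g_{4n+1}(t) / g_1(t)^2 = (1 + ct)^(-1),
   which equals 1 only at t = 0. *)

definition quat_form :: "real \<Rightarrow> real \<Rightarrow> real \<Rightarrow> nat \<Rightarrow> nat \<Rightarrow> real" where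
  "quat_form z1 z2 z3 k k' = z1 * qconst k k' 1 + z2 * qconst k k' 2 + z3 * qconst k k' 3"

lemma quat_form_square:
  assumes "k1 \<in> {1..4}" "k3 \<in> {1..4}"
  shows "(\<Sum>k\<in>{1..4}. quat_form z1 z2 z3 k1 k * quat_form z1 z2 z3 k k3)
       = - (z1^2 + z2^2 + z3^2) * (if k1 = k3 then 1 else 0)"
proof -
  have four: "{1..4::nat} = {1,2,3,4}" by auto
  from assms have "k1 \<in> {1,2,3,4}" "k3 \<in> {1,2,3,4}" by auto
  then show ?thesis unfolding four
    by (auto simp: quat_form_def qconst_def qup_def power2_eq_square algebra_simps)
qed

definition qindex :: "nat \<Rightarrow> nat \<Rightarrow> nat \<Rightarrow> nat" where
  "qindex n k l = (k - 1) * n + l + 1"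

lemma
  assumes "k \<in> {1..4}" "l < n"
  shows qkind_qindex: "qkind n (qindex n k l) = k"
    and qblock_qindex: "qblock n (qindex n k l) = l"
    and qindex_mem: "qindex n k l \<in> {1..4*n}"
proof -
  have "((k - 1) * n + l) div n = k - 1" using assms by simp
  then show "qkind n (qindex n k l) = k" using assms by (simp add: qkind_def qindex_def)
  show "qblock n (qindex n k l) = l" using assms by (simp add: qblock_def qindex_def)
  have "(k - 1) * n + l + 1 \<le> 3 * n + (n - 1) + 1" using assms
    by (intro add_mono add_left_mono) auto
  then show "qindex n k l \<in> {1..4*n}" using assms by (auto simp: qindex_def)
qed

lemma
  assumes "\<beta> \<in> {1..4*n}"
  shows qkind_mem: "qkind n \<beta> \<in> {1..4}"
    and qblock_less: "qblock n \<beta> < n"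
    and qindex_qkind_qblock: "qindex n (qkind n \<beta>) (qblock n \<beta>) = \<beta>"
proof -
  have "\<beta> - 1 < 4 * n" using assms by auto
  then have "(\<beta> - 1) div n < 4" by (simp add: less_mult_imp_div_less)
  then show "qkind n \<beta> \<in> {1..4}" by (simp add: qkind_def)
  show "qblock n \<beta> < n" using assms by (simp add: qblock_def)
  show "qindex n (qkind n \<beta>) (qblock n \<beta>) = \<beta>" using assms
    by (simp add: qindex_def qkind_def qblock_def)
qed

lemma sum_supported_on_block:
  fixes f :: "nat \<Rightarrow> real"
  assumes "l < n" and "\<And>b. b \<in> {1..4*n} \<Longrightarrow> qblock n b \<noteq> l \<Longrightarrow> f b = 0"
  shows "(\<Sum>b\<in>{1..4*n}. f b) = (\<Sum>k\<in>{1..4}. f (qindex n k l))"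
proof -
  let ?B = "(\<lambda>k. qindex n k l) ` {1..4}"
  have "(\<Sum>b\<in>{1..4*n}. f b) = (\<Sum>b\<in>?B. f b)"
  proof (rule sum.mono_neutral_right)
    show "?B \<subseteq> {1..4*n}" using qindex_mem[OF _ assms(1)] by auto
    show "\<forall>b\<in>{1..4*n} - ?B. f b = 0"
    proof
      fix b assume b: "b \<in> {1..4*n} - ?B"
      have "qblock n b \<noteq> l"
        using b qkind_mem[of b n] qindex_qkind_qblock[of b n] by force
      then show "f b = 0" using assms(2) b by blast
    qed
  qed simp
  also have "\<dots> = (\<Sum>k\<in>{1..4}. f (qindex n k l))"
    by (rule sum.reindex_cong[OF _ refl refl]) (metis inj_onI qkind_qindex[OF _ assms(1)])
  finally show ?thesis .
qed

definition qbr_form :: "nat \<Rightarrow> (nat \<Rightarrow> real) \<Rightarrow> nat \<Rightarrow> nat \<Rightarrow> real" where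
  "qbr_form n Z a b = Z (4*n+1) * qsc n a b 1 + Z (4*n+2) * qsc n a b 2 + Z (4*n+3) * qsc n a b 3"

lemma qbr_form_eq:
  assumes "a \<in> {1..4*n}" "b \<in> {1..4*n}"
  shows "qbr_form n Z a b = (if qblock n a = qblock n b
     then quat_form (Z (4*n+1)) (Z (4*n+2)) (Z (4*n+3)) (qkind n a) (qkind n b) else 0)"
  using assms by (simp add: qbr_form_def qsc_def quat_form_def)

lemma qbr_form_square:
  assumes a: "a \<in> {1..4*n}" and c: "c \<in> {1..4*n}"
  shows "(\<Sum>b\<in>{1..4*n}. qbr_form n Z a b * qbr_form n Z b c)
     = - (Z (4*n+1)^2 + Z (4*n+2)^2 + Z (4*n+3)^2) * (if a = c then 1 else 0)"
proof (cases "qblock n a = qblock n c")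
  case False
  have "(\<Sum>b\<in>{1..4*n}. qbr_form n Z a b * qbr_form n Z b c) = 0"
    using qbr_form_eq[OF a] qbr_form_eq[OF _ c] False by (intro sum.neutral) auto
  moreover have "a \<noteq> c" using False by auto
  ultimately show ?thesis by simp
next
  case True
  define l where "l = qblock n a"
  have l: "l < n" using qblock_less[OF a] by (simp add: l_def)
  let ?J = "quat_form (Z (4*n+1)) (Z (4*n+2)) (Z (4*n+3))"
  have "(\<Sum>b\<in>{1..4*n}. qbr_form n Z a b * qbr_form n Z b c)
      = (\<Sum>k\<in>{1..4}. qbr_form n Z a (qindex n k l) * qbr_form n Z (qindex n k l) c)"
    by (rule sum_supported_on_block[OF l]) (use qbr_form_eq[OF a] l_def in auto)
  also have "\<dots> = (\<Sum>k\<in>{1..4}. ?J (qkind n a) k * ?J k (qkind n c))"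
  proof (rule sum.cong[OF refl])
    fix k :: nat assume k: "k \<in> {1..4}"
    show "qbr_form n Z a (qindex n k l) * qbr_form n Z (qindex n k l) c
        = ?J (qkind n a) k * ?J k (qkind n c)"
      using qbr_form_eq[OF a qindex_mem[OF k l]] qbr_form_eq[OF qindex_mem[OF k l] c]
        qkind_qindex[OF k l] qblock_qindex[OF k l] l_def True by simp
  qed
  also have "\<dots> = - (Z (4*n+1)^2 + Z (4*n+2)^2 + Z (4*n+3)^2)
      * (if qkind n a = qkind n c then 1 else 0)"
    by (rule quat_form_square[OF qkind_mem[OF a] qkind_mem[OF c]])
  also have "(qkind n a = qkind n c) = (a = c)"
    using qindex_qkind_qblock[OF a] qindex_qkind_qblock[OF c] True by metis
  finally show ?thesis .
qed

definition qj_diag :: "nat \<Rightarrow> real \<Rightarrow> real \<Rightarrow> (nat \<Rightarrow> real) \<Rightarrow> (nat \<Rightarrow> real) \<Rightarrow> (nat \<Rightarrow> real)" where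
  "qj_diag n a b Z X =
     (\<lambda>c. if c \<in> {1..4*n} then b / a * (\<Sum>d\<in>{1..4*n}. X d * qbr_form n Z d c) else 0)"

lemma qip_qV_const:
  assumes "W \<in> qV n" "\<forall>i\<in>{1..4*n}. g i = a"
  shows "qip n g W Y = (\<Sum>i\<in>{1..4*n}. a * W i * Y i)"
proof -
  have "qip n g W Y = (\<Sum>i\<in>{1..4*n}. g i * W i * Y i)"
    unfolding qip_def
    by (rule sum.mono_neutral_right) (use assms(1) in \<open>auto simp: qV_def\<close>)
  then show ?thesis using assms(2) by simp
qed

lemma qip_qbr_const:
  assumes "\<forall>i\<in>{4*n+1..4*n+3}. g i = b"
  shows "qip n g Z (qbr n X Y)
       = b * (\<Sum>d\<in>{1..4*n}. \<Sum>e\<in>{1..4*n}. X d * Y e * qbr_form n Z d e)"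
proof -
  have "qip n g Z (qbr n X Y) = (\<Sum>i\<in>{4*n+1..4*n+3}. g i * Z i * qbr n X Y i)"
    unfolding qip_def by (rule sum.mono_neutral_right) (auto simp: qbr_def)
  also have "{4*n+1..4*n+3} = {4*n+1, 4*n+2, 4*n+3}" by auto
  finally show ?thesis using assms
    by (simp add: qbr_def qbr_form_def sum.distrib sum_distrib_left algebra_simps)
qed

lemma qip_qZ_const:
  assumes Z: "Z \<in> qZ n" and "\<forall>i\<in>{4*n+1..4*n+3}. g i = b"
  shows "qip n g Z Z = b * (Z (4*n+1)^2 + Z (4*n+2)^2 + Z (4*n+3)^2)"
proof -
  have "qip n g Z Z = (\<Sum>i\<in>{4*n+1..4*n+3}. g i * Z i * Z i)"
    unfolding qip_def
    by (rule sum.mono_neutral_right) (use Z in \<open>auto simp: qZ_def\<close>)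
  also have "{4*n+1..4*n+3} = {4*n+1, 4*n+2, 4*n+3}" by auto
  finally show ?thesis using assms(2) by (simp add: power2_eq_square algebra_simps)
qed

lemma qj_eq_qj_diag:
  assumes ga: "\<forall>i\<in>{1..4*n}. g i = a" and gb: "\<forall>i\<in>{4*n+1..4*n+3}. g i = b" and "a \<noteq> 0"
  shows "qj n g Z X = qj_diag n a b Z X"
proof -
  let ?P = "\<lambda>W. W \<in> qV n \<and> (\<forall>Y\<in>qV n. qip n g W Y = qip n g Z (qbr n X Y))"
  have jV: "qj_diag n a b Z X \<in> qV n" by (auto simp: qV_def qj_diag_def)
  have ip_qV: "qip n g V (\<lambda>i. if i = c then 1 else 0) = a * V c"
    if "V \<in> qV n" "c \<in> {1..4*n}" for V c
    using qip_qV_const[OF that(1) ga] that(2) by (simp add: if_distrib sum.delta cong: if_cong)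
  have "?P (qj_diag n a b Z X)"
  proof (intro conjI ballI jV)
    fix Y
    have "qip n g (qj_diag n a b Z X) Y
        = (\<Sum>e\<in>{1..4*n}. a * (b / a * (\<Sum>d\<in>{1..4*n}. X d * qbr_form n Z d e)) * Y e)"
      using qip_qV_const[OF jV ga] by (simp add: qj_diag_def)
    also have "\<dots> = b * (\<Sum>e\<in>{1..4*n}. \<Sum>d\<in>{1..4*n}. X d * Y e * qbr_form n Z d e)"
      using \<open>a \<noteq> 0\<close> by (simp add: sum_distrib_left sum_distrib_right algebra_simps)
    also have "\<dots> = b * (\<Sum>d\<in>{1..4*n}. \<Sum>e\<in>{1..4*n}. X d * Y e * qbr_form n Z d e)"
      by (subst sum.swap) simp
    also have "\<dots> = qip n g Z (qbr n X Y)"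
      using qip_qbr_const[OF gb] by simp
    finally show "qip n g (qj_diag n a b Z X) Y = qip n g Z (qbr n X Y)" .
  qed
  moreover have "W = qj_diag n a b Z X" if W: "?P W" for W
  proof
    fix c
    show "W c = qj_diag n a b Z X c"
    proof (cases "c \<in> {1..4*n}")
      case False
      then show ?thesis using W by (force simp: qV_def qj_diag_def)
    next
      case True
      have "(\<lambda>i. if i = c then 1 else 0) \<in> qV n" using True by (auto simp: qV_def)
      then have "a * W c = a * qj_diag n a b Z X c"
        using W \<open>?P (qj_diag n a b Z X)\<close> ip_qV[OF _ True] jV by metis
      then show ?thesis using \<open>a \<noteq> 0\<close> by simp
    qed
  qed
  ultimately show ?thesis unfolding qj_def by (rule the_equality)
qed

lemma qj_diag_square:
  assumes X: "X \<in> qV n"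
  shows "qj_diag n a b Z (qj_diag n a b Z X)
       = (\<lambda>c. - ((b / a)^2) * (Z (4*n+1)^2 + Z (4*n+2)^2 + Z (4*n+3)^2) * X c)"
proof
  fix c
  let ?S = "Z (4*n+1)^2 + Z (4*n+2)^2 + Z (4*n+3)^2"
  show "qj_diag n a b Z (qj_diag n a b Z X) c = - ((b / a)^2) * ?S * X c"
  proof (cases "c \<in> {1..4*n}")
    case False
    then show ?thesis using X by (force simp: qV_def qj_diag_def)
  next
    case True
    have "qj_diag n a b Z (qj_diag n a b Z X) c
        = b / a * (\<Sum>e\<in>{1..4*n}. (b / a * (\<Sum>d\<in>{1..4*n}. X d * qbr_form n Z d e)) * qbr_form n Z e c)"
      using True by (simp add: qj_diag_def)
    also have "\<dots> = (b / a)^2 * (\<Sum>e\<in>{1..4*n}. \<Sum>d\<in>{1..4*n}. X d * (qbr_form n Z d e * qbr_form n Z e c))"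
      by (simp add: sum_distrib_left sum_distrib_right power2_eq_square algebra_simps)
    also have "\<dots> = (b / a)^2 * (\<Sum>d\<in>{1..4*n}. X d * (\<Sum>e\<in>{1..4*n}. qbr_form n Z d e * qbr_form n Z e c))"
      by (subst sum.swap) (simp add: sum_distrib_left)
    also have "\<dots> = (b / a)^2 * (\<Sum>d\<in>{1..4*n}. X d * (- ?S * (if d = c then 1 else 0)))"
      using qbr_form_square[OF _ True] by simp
    also have "\<dots> = - ((b / a)^2) * ?S * X c"
      using True by (simp add: if_distrib sum.delta algebra_simps cong: if_cong)
    finally show ?thesis .
  qed
qed

lemma heisenberg_type_diag_iff:
  assumes ga: "\<forall>i\<in>{1..4*n}. g i = a" and gb: "\<forall>i\<in>{4*n+1..4*n+3}. g i = b"
    and "a \<noteq> 0" "b \<noteq> 0" "n \<ge> 1"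
  shows "heisenberg_type n g \<longleftrightarrow> b = a^2"
proof
  assume H: "heisenberg_type n g"
  define Z where "Z = (\<lambda>i::nat. if i = 4*n+1 then 1 else (0::real))"
  define X where "X = (\<lambda>i::nat. if i = 1 then 1 else (0::real))"
  have Z: "Z \<in> qZ n" by (auto simp: qZ_def Z_def)
  have X: "X \<in> qV n" using \<open>n \<ge> 1\<close> by (auto simp: qV_def X_def)
  have "qj n g Z (qj n g Z X) 1 = - qip n g Z Z * X 1"
    using H Z X unfolding heisenberg_type_def by metis
  then have "(b / a)^2 = b"
    using qj_eq_qj_diag[OF ga gb \<open>a \<noteq> 0\<close>] qj_diag_square[OF X] qip_qZ_const[OF Z gb] \<open>n \<ge> 1\<close>
    by (simp add: Z_def X_def)
  then show "b = a^2" using \<open>a \<noteq> 0\<close> \<open>b \<noteq> 0\<close> by (simp add: field_simps power2_eq_square)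
next
  assume "b = a^2"
  then have "(b / a)^2 = b" using \<open>a \<noteq> 0\<close> by (simp add: power2_eq_square)
  then show "heisenberg_type n g" unfolding heisenberg_type_def
    using qj_eq_qj_diag[OF ga gb \<open>a \<noteq> 0\<close>] qj_diag_square qip_qZ_const[OF _ gb] by simp
qed

lemma ricci_bourguignon_exponents:
  assumes "3 + real n - 3 * real n * \<rho> \<noteq> 0"
  shows "2 * (3 * (1 - 2 * real n * \<rho>) / (6 + 2 * real n - 6 * real n * \<rho>))
       = - real n * (1 + 3*\<rho>) / (3 + real n - 3 * real n * \<rho>) + 1"
proof -
  have "6 + 2 * real n - 6 * real n * \<rho> = 2 * (3 + real n - 3 * real n * \<rho>)" by simp
  then show ?thesis using assms by (simp add: field_simps)
qed

theorem proposition2p8: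
  fixes n :: nat and \<rho> c :: real and g0 :: "nat \<Rightarrow> real" and g :: "real \<Rightarrow> nat \<Rightarrow> real"
  assumes "n \<ge> 1"
    and "3 + real n - 3 * real n * \<rho> \<noteq> 0"
    and "\<forall>\<alpha>\<in>{1..4*n+3}. g0 \<alpha> > 0"
    and "\<forall>j\<in>{1..4*n}. g0 j = g0 1"
    and "g0 (4*n+2) = g0 (4*n+1)" and "g0 (4*n+3) = g0 (4*n+1)"
    and "(g0 1)^2 = g0 (4*n+1)"
    and c_def: "c = g0 (4*n+1) / (g0 1)^2 * (6 + 2 * real n - 6 * real n * \<rho>)"
    and g_def: "g = (\<lambda>t \<alpha>. if 1 \<le> \<alpha> \<and> \<alpha> \<le> 4*n then
                 g0 1 * (1 + c*t) powr (3 * (1 - 2 * real n * \<rho>) / (6 + 2 * real n - 6 * real n * \<rho>))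
               else g0 (4*n+1) * (1 + c*t) powr (- real n * (1 + 3*\<rho>) / (3 + real n - 3 * real n * \<rho>)))"
  shows "heisenberg_type n g0 \<and>
         (\<forall>t. t \<noteq> 0 \<and> 1 + c*t > 0 \<longrightarrow> \<not> heisenberg_type n (g t))"
proof -
  define a0 b0 where "a0 = g0 1" and "b0 = g0 (4*n+1)"
  have a0: "a0 > 0" and b0: "b0 > 0" using assms(1,3) by (auto simp: a0_def b0_def)
  have b0_eq: "b0 = a0^2" using assms(7) by (simp add: a0_def b0_def)
  have centre: "{4*n+1..4*n+3} = {4*n+1, 4*n+2, 4*n+3}" by auto
  have "heisenberg_type n g0"
  proof (rule heisenberg_type_diag_iff[THEN iffD2])
    show "\<forall>i\<in>{1..4*n}. g0 i = a0" using assms(4) unfolding a0_def by blast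
    show "\<forall>i\<in>{4*n+1..4*n+3}. g0 i = b0" using assms(5,6) unfolding centre b0_def by simp
  qed (use a0 b0 b0_eq assms(1) in auto)
  moreover have "\<not> heisenberg_type n (g t)" if t: "t \<noteq> 0" "1 + c*t > 0" for t
  proof
    assume H: "heisenberg_type n (g t)"
    define x p q where "x = 1 + c*t"
      and "p = 3 * (1 - 2 * real n * \<rho>) / (6 + 2 * real n - 6 * real n * \<rho>)"
      and "q = - real n * (1 + 3*\<rho>) / (3 + real n - 3 * real n * \<rho>)"
    have x: "x > 0" using t by (simp add: x_def)
    have gV: "\<forall>i\<in>{1..4*n}. g t i = a0 * x powr p"
      and gZ: "\<forall>i\<in>{4*n+1..4*n+3}. g t i = b0 * x powr q"
      using g_def by (auto simp: a0_def b0_def x_def p_def q_def)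
    have "b0 * x powr q = (a0 * x powr p)^2"
      using heisenberg_type_diag_iff[OF gV gZ] H a0 b0 x assms(1) by simp
    also have "\<dots> = b0 * x powr (2*p)"
      using b0_eq x by (simp add: power_mult_distrib power2_eq_square powr_add[symmetric])
    also have "2*p = q + 1"
      using ricci_bourguignon_exponents[OF assms(2)] by (simp add: p_def q_def)
    finally have "x = 1" using b0 x by (simp add: powr_add)
    moreover have "c \<noteq> 0"
    proof -
      have "6 + 2 * real n - 6 * real n * \<rho> \<noteq> 0" using assms(2) by linarith
      then show ?thesis using a0 b0 unfolding c_def a0_def b0_def by simp
    qed
    ultimately show False using t by (simp add: x_def)
  qed
  ultimately show ?thesis by blast
qed

end
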